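(* Let $k$ be a field of characteristic zero and let $(A,M)$ be a finite dimensional Gorenstein local commutative $k$-algebra which is not a principal ideal algebra. Then every $k$-algebra homomorphism from $A$ into a principal ideal $k$-algebra maps the socle $\operatorname{soc}(A)=\{a\in A: aM=0\}$ to zero. In particular, there is no injective $k$-algebra homomorphism from $A$ into a principal ideal algebra.
   Context: All algebras are commutative, unital and finite dimensional over $k$. A principal ideal algebra is a finite dimensional commutative $k$-algebra in which every ideal is principal. A finite dimensional local algebra $(A,M)$ is called Gorenstein if $\dim_k\operatorname{soc}(A)=1$, where $\operatorname{soc}(A)$ is the annihilator of $M$. *)

theory Defs
  imports Complex_Main
begin

text \<open>A commutative unital k-algebra is modelled as a type 'a of class comm_ring_1
together with its structure map iota : k -> A, a unital ring homomorphism.\<close>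

definition alg_scale :: "('k \<Rightarrow> 'a::comm_ring_1) \<Rightarrow> 'k \<Rightarrow> 'a \<Rightarrow> 'a" where
  "alg_scale \<iota> c a = \<iota> c * a"

definition is_ring_hom :: "('a::comm_ring_1 \<Rightarrow> 'b::comm_ring_1) \<Rightarrow> bool" where
  "is_ring_hom f \<longleftrightarrow> f 1 = 1 \<and> (\<forall>x y. f (x + y) = f x + f y) \<and> (\<forall>x y. f (x * y) = f x * f y)"

definition k_algebra :: "('k::field \<Rightarrow> 'a::comm_ring_1) \<Rightarrow> bool" where
  "k_algebra \<iota> \<longleftrightarrow> is_ring_hom \<iota>"

definition fin_dim_algebra :: "('k::field \<Rightarrow> 'a::comm_ring_1) \<Rightarrow> bool" where
  "fin_dim_algebra \<iota> \<longleftrightarrow> k_algebra \<iota> \<and>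
     (\<exists>S. finite S \<and> module.span (alg_scale \<iota>) S = UNIV)"

definition alg_hom :: "('k::field \<Rightarrow> 'a::comm_ring_1) \<Rightarrow> ('k \<Rightarrow> 'b::comm_ring_1) \<Rightarrow> ('a \<Rightarrow> 'b) \<Rightarrow> bool" where
  "alg_hom \<iota>A \<iota>B f \<longleftrightarrow> is_ring_hom f \<and> (\<forall>c. f (\<iota>A c) = \<iota>B c)"

definition is_ideal :: "'a::comm_ring_1 set \<Rightarrow> bool" where
  "is_ideal I \<longleftrightarrow> 0 \<in> I \<and> (\<forall>x\<in>I. \<forall>y\<in>I. x + y \<in> I) \<and> (\<forall>r x. x \<in> I \<longrightarrow> r * x \<in> I)"

definition principal_ideal :: "'a::comm_ring_1 set \<Rightarrow> bool" where
  "principal_ideal I \<longleftrightarrow> (\<exists>a. I = {r * a | r. True})"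

definition maximal_ideal :: "'a::comm_ring_1 set \<Rightarrow> bool" where
  "maximal_ideal M \<longleftrightarrow> is_ideal M \<and> M \<noteq> UNIV \<and>
     (\<forall>J. is_ideal J \<and> M \<subseteq> J \<longrightarrow> J = M \<or> J = UNIV)"

definition local_algebra :: "('k::field \<Rightarrow> 'a::comm_ring_1) \<Rightarrow> 'a set \<Rightarrow> bool" where
  "local_algebra \<iota> M \<longleftrightarrow> fin_dim_algebra \<iota> \<and> maximal_ideal M \<and>
     (\<forall>N. maximal_ideal N \<longrightarrow> N = M)"

definition principal_ideal_algebra :: "('k::field \<Rightarrow> 'a::comm_ring_1) \<Rightarrow> bool" where
  "principal_ideal_algebra \<iota> \<longleftrightarrow> fin_dim_algebra \<iota> \<and>
     (\<forall>I::'a set. is_ideal I \<longrightarrow> principal_ideal I)"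

definition socle :: "'a::comm_ring_1 set \<Rightarrow> 'a set" where
  "socle M = {a. \<forall>m\<in>M. a * m = 0}"

definition gorenstein :: "('k::field \<Rightarrow> 'a::comm_ring_1) \<Rightarrow> 'a set \<Rightarrow> bool" where
  "gorenstein \<iota> M \<longleftrightarrow> local_algebra \<iota> M \<and> vector_space.dim (alg_scale \<iota>) (socle M) = 1"

end

theory Submission
  imports Defs
begin

text \<open>
  If f did not kill the socle it would be injective, because every nonzero ideal of a Gorenstein
  local algebra contains its one-dimensional socle. So assume f is injective.

  Over an infinite field, every subspace N of a principal ideal algebra B lies in the principal
  ideal generated by one of its elements: take x in N with dim (xB) maximal. For y in N write
  (x, y) = (g), x = p g, y = q g and g = a x + b y, so that a p + b q acts as the identity on gB.
  A nonzero vector of gB killed by p + d q is not killed by p + c q for c different from d, so if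
  every member of the pencil p + c q had a kernel on gB, the annihilators in gB of products of
  more and more distinct members would form a strictly increasing chain of subspaces of unbounded
  length. Hence some p + c q acts injectively on gB, i.e. (x + c y) = (g), and maximality of x
  gives y in xB.

  Applied to N = f(M) this gives x in M with f(M) contained in f(x)B, and injectivity of f turns
  this into ann(x) contained in soc(A). By rank-nullity for multiplication by x, dim xA is at least
  dim A - 1 = dim M, so M = xA. A local algebra with principal maximal ideal is a principal ideal
  algebra, a contradiction.
\<close>

abbreviation PIdl :: "'a::comm_ring_1 \<Rightarrow> 'a set" where
  "PIdl a \<equiv> {r * a | r. True}"

lemma is_ideal_0: "is_ideal I \<Longrightarrow> 0 \<in> I"
  and is_ideal_add: "is_ideal I \<Longrightarrow> x \<in> I \<Longrightarrow> y \<in> I \<Longrightarrow> x + y \<in> I"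
  and is_ideal_mult: "is_ideal I \<Longrightarrow> x \<in> I \<Longrightarrow> r * x \<in> I"
  by (auto simp: is_ideal_def)

lemma is_ideal_diff: "is_ideal I \<Longrightarrow> x \<in> I \<Longrightarrow> y \<in> I \<Longrightarrow> x - y \<in> I"
  using is_ideal_add[of I x "(-1) * y"] is_ideal_mult[of I y "-1"] by simp

lemma is_ideal_PIdl: "is_ideal (PIdl a)"
  unfolding is_ideal_def
proof (intro conjI ballI allI impI)
  show "0 \<in> PIdl a"
    by (metis (mono_tags) mem_Collect_eq mult_zero_left)
  fix x y assume "x \<in> PIdl a" "y \<in> PIdl a"
  then obtain r s where "x = r * a" "y = s * a" by blast
  then have "x + y = (r + s) * a" by (simp add: distrib_right)
  then show "x + y \<in> PIdl a" by blast
next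
  fix r x assume "x \<in> PIdl a"
  then obtain s where "x = s * a" by blast
  then have "r * x = (r * s) * a" by (simp add: mult.assoc)
  then show "r * x \<in> PIdl a" by blast
qed

lemma PIdl_self: "a \<in> PIdl a"
  by (metis (mono_tags) mem_Collect_eq mult_1)

lemma PIdl_subset: "is_ideal I \<Longrightarrow> a \<in> I \<Longrightarrow> PIdl a \<subseteq> I"
  using is_ideal_mult by blast

lemma mult_mem_PIdl: "x \<in> PIdl a \<Longrightarrow> r * x \<in> PIdl a"
  using is_ideal_mult[OF is_ideal_PIdl] .

lemma is_ideal_pair: "is_ideal {\<beta> * v + \<gamma> * w | \<beta> \<gamma>. True}"
  unfolding is_ideal_def
proof (intro conjI ballI allI impI)
  show "0 \<in> {\<beta> * v + \<gamma> * w | \<beta> \<gamma>. True}"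
    by (rule CollectI, rule exI[of _ 0], rule exI[of _ 0]) simp
  fix x y assume "x \<in> {\<beta> * v + \<gamma> * w | \<beta> \<gamma>. True}" "y \<in> {\<beta> * v + \<gamma> * w | \<beta> \<gamma>. True}"
  then obtain \<beta>1 \<gamma>1 \<beta>2 \<gamma>2 where "x = \<beta>1 * v + \<gamma>1 * w" "y = \<beta>2 * v + \<gamma>2 * w" by blast
  then have "x + y = (\<beta>1 + \<beta>2) * v + (\<gamma>1 + \<gamma>2) * w" by (simp add: algebra_simps)
  then show "x + y \<in> {\<beta> * v + \<gamma> * w | \<beta> \<gamma>. True}" by blast
next
  fix r x assume "x \<in> {\<beta> * v + \<gamma> * w | \<beta> \<gamma>. True}"
  then obtain \<beta> \<gamma> where "x = \<beta> * v + \<gamma> * w" by blast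
  then have "r * x = (r * \<beta>) * v + (r * \<gamma>) * w" by (simp add: algebra_simps)
  then show "r * x \<in> {\<beta> * v + \<gamma> * w | \<beta> \<gamma>. True}" by blast
qed

lemma is_ideal_annihilator_Int:
  assumes "is_ideal V" shows "is_ideal {y \<in> V. r * y = 0}"
  using assms unfolding is_ideal_def by (simp add: distrib_left mult.left_commute)

lemma is_ideal_socle: "is_ideal (socle M)"
  unfolding is_ideal_def socle_def by (simp add: distrib_right mult.assoc)

lemma is_ring_hom_0: "is_ring_hom g \<Longrightarrow> g 0 = 0"
  unfolding is_ring_hom_def by (metis add_cancel_right_right add_0)

lemma is_ring_hom_diff: "is_ring_hom g \<Longrightarrow> g (x - y) = g x - g y"
  unfolding is_ring_hom_def by (metis eq_diff_eq)

lemma is_ideal_kernel: "is_ring_hom g \<Longrightarrow> is_ideal {x. g x = 0}"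
  unfolding is_ideal_def by (simp add: is_ring_hom_0) (simp add: is_ring_hom_def)

lemma is_ring_hom_inj_iff: "is_ring_hom g \<Longrightarrow> inj g \<longleftrightarrow> (\<forall>x. g x = 0 \<longrightarrow> x = 0)"
  unfolding inj_def by (metis is_ring_hom_0 is_ring_hom_diff right_minus_eq)

lemma (in finite_dimensional_vector_space) span_Int_span_subset_0:
  assumes B: "independent B" and S: "S \<subseteq> B" and T: "T \<subseteq> B" and "S \<inter> T = {}"
  shows "span S \<inter> span T \<subseteq> {0}"
proof -
  have "finite B" by (rule finiteI_independent[OF B])
  then have fin: "finite S" "finite T"
    using S T by (auto intro: finite_subset)
  have indep: "independent S" "independent T" "independent (S \<union> T)"
    using independent_mono[OF B] S T by auto
  have "dim {x + y |x y. x \<in> span S \<and> y \<in> span T} = card S + card T"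
    using dim_eq_card_independent[OF indep(3)] card_Un_disjoint[OF fin \<open>S \<inter> T = {}\<close>]
    by (simp flip: span_Un)
  then have "dim (span S \<inter> span T) = 0"
    using dim_sums_Int[OF subspace_span subspace_span, of S T]
      dim_eq_card_independent[OF indep(1)] dim_eq_card_independent[OF indep(2)] by simp
  then show ?thesis by simp
qed

context finite_dimensional_vector_space_pair_1
begin

lemma dim_kernel_add_dim_range:
  assumes lin: "Vector_Spaces.linear s1 s2 f"
  shows "vs1.dim {x. f x = 0} + vs2.dim (range f) = vs1.dimension"
proof -
  let ?K = "{x. f x = 0}"
  have K: "vs1.subspace ?K"
    by (rule linear_subspace_kernel[OF lin])
  obtain BK where BK: "BK \<subseteq> ?K" "vs1.independent BK" "?K \<subseteq> vs1.span BK" "card BK = vs1.dim ?K"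
    using vs1.basis_exists by blast
  obtain B where B: "BK \<subseteq> B" "vs1.independent B" "UNIV \<subseteq> vs1.span B"
    by (rule vs1.maximal_independent_subset_extend[OF subset_UNIV BK(2)])
  define C where "C = B - BK"
  have "finite B"
    using B(2) by (rule vs1.finiteI_independent)
  have indep_C: "vs1.independent C"
    using B(2) vs1.independent_mono unfolding C_def by blast
  have span_BK: "vs1.span BK = ?K"
    by (rule vs1.span_subspace[OF BK(1,3) K])
  have span_B: "vs1.span B = UNIV"
    using B(3) by blast
  have card_B: "card B = vs1.dimension"
    using vs1.dim_span[of B] vs1.dim_eq_card_independent[OF B(2)] span_B by (simp add: vs1.dimension_def)
  have card_C: "card C = card B - card BK"
    unfolding C_def using \<open>finite B\<close> B(1) by (simp add: card_Diff_subset finite_subset)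
  have sum_eq: "{x + y |x y. x \<in> ?K \<and> y \<in> vs1.span C} = UNIV"
    using vs1.span_Un[of BK C] span_B span_BK B(1) unfolding C_def by (simp add: Un_absorb1)
  have "vs1.span BK \<inter> vs1.span C \<subseteq> {0}"
    by (rule vs1.span_Int_span_subset_0[OF B(2) B(1)]) (auto simp: C_def)
  then have "\<forall>x\<in>vs1.span C. f x = 0 \<longrightarrow> x = 0"
    using span_BK by auto
  then have "inj_on f (vs1.span C)"
    using linear_inj_on_iff_eq_0[OF lin vs1.subspace_span] by blast
  then have "vs2.dim (f ` vs1.span C) = card C"
    using dim_image_eq[OF lin, of "vs1.span C"] vs1.dim_eq_card_independent[OF indep_C]
    by (simp add: vs1.span_span)
  moreover have "f ` vs1.span C = range f"
  proof (intro set_eqI iffI)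
    fix z assume "z \<in> range f"
    then obtain x where "z = f x" by blast
    moreover obtain k c where "x = k + c" "k \<in> ?K" "c \<in> vs1.span C"
      using sum_eq by blast
    ultimately have "z = f c"
      using linear_add[OF lin] by simp
    then show "z \<in> f ` vs1.span C"
      using \<open>c \<in> vs1.span C\<close> by blast
  qed blast
  ultimately show ?thesis
    using card_B card_C BK(4) card_mono[OF \<open>finite B\<close> B(1)] by simp
qed

end

locale fd_algebra =
  fixes \<iota> :: "'k::field \<Rightarrow> 'a::comm_ring_1"
  assumes fin_dim: "fin_dim_algebra \<iota>"
begin

lemma \<iota>_1 [simp]: "\<iota> 1 = 1"
  and \<iota>_add [simp]: "\<iota> (c + d) = \<iota> c + \<iota> d"
  and \<iota>_mult [simp]: "\<iota> (c * d) = \<iota> c * \<iota> d"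
  using fin_dim by (auto simp: fin_dim_algebra_def k_algebra_def is_ring_hom_def)

lemma \<iota>_0 [simp]: "\<iota> 0 = 0"
  and \<iota>_diff [simp]: "\<iota> (c - d) = \<iota> c - \<iota> d"
  using fin_dim is_ring_hom_0 is_ring_hom_diff by (auto simp: fin_dim_algebra_def k_algebra_def)

lemma \<iota>_inverse: "c \<noteq> 0 \<Longrightarrow> \<iota> (inverse c) * \<iota> c = 1"
  by (metis \<iota>_mult \<iota>_1 field_class.field_inverse)

sublocale vector_space "alg_scale \<iota>"
  by unfold_locales (auto simp: alg_scale_def algebra_simps)

definition alg_basis :: "'a set" where
  "alg_basis = (SOME B. finite B \<and> independent B \<and> span B = UNIV)"

lemma alg_basis_is_basis: "finite alg_basis \<and> independent alg_basis \<and> span alg_basis = UNIV"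
proof -
  obtain S where S: "finite S" "span S = UNIV"
    using fin_dim by (auto simp: fin_dim_algebra_def)
  obtain B where B: "B \<subseteq> S" "independent B" "S \<subseteq> span B"
    by (rule maximal_independent_subset)
  have "span B = UNIV"
    using B S by (metis span_mono span_span subset_UNIV subset_antisym)
  then have "finite B \<and> independent B \<and> span B = UNIV"
    using B S finite_subset by blast
  then show ?thesis
    unfolding alg_basis_def by (rule someI)
qed

sublocale finite_dimensional_vector_space "alg_scale \<iota>" alg_basis
  by unfold_locales (use alg_basis_is_basis in auto)

sublocale pair: finite_dimensional_vector_space_pair_1 "alg_scale \<iota>" alg_basis "alg_scale \<iota>" ..

lemma linear_mult: "Vector_Spaces.linear (alg_scale \<iota>) (alg_scale \<iota>) (\<lambda>y. y * x)"
  unfolding Vector_Spaces.linear_iff by (simp add: alg_scale_def algebra_simps vector_space_axioms)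

lemma subspace_ideal: "is_ideal (I :: 'a set) \<Longrightarrow> subspace I"
  unfolding is_ideal_def subspace_def alg_scale_def by auto

lemma ideal_eq_if_dim_le: "is_ideal (I :: 'a set) \<Longrightarrow> is_ideal J \<Longrightarrow> I \<subseteq> J \<Longrightarrow> dim J \<le> dim I \<Longrightarrow> I = J"
  using subspace_dim_equal subspace_ideal by blast

lemma subspace_image_ideal:
  assumes f: "alg_hom \<iota>A \<iota> f" and I: "is_ideal I"
  shows "subspace (f ` I)"
proof -
  have f_hom: "f 0 = 0" "\<And>x y. f (x + y) = f x + f y" "\<And>x y. f (x * y) = f x * f y"
      "\<And>c. f (\<iota>A c) = \<iota> c"
    using f is_ring_hom_0 unfolding alg_hom_def is_ring_hom_def by blast+
  show ?thesis
    unfolding subspace_def alg_scale_def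
  proof (intro conjI ballI allI)
    show "0 \<in> f ` I"
      using is_ideal_0[OF I] f_hom(1) by (metis image_eqI)
    fix u v assume "u \<in> f ` I" "v \<in> f ` I"
    then obtain x y where "x \<in> I" "y \<in> I" "u = f x" "v = f y" by blast
    then show "u + v \<in> f ` I"
      using is_ideal_add[OF I] f_hom(2) by (metis image_eqI)
  next
    fix c u assume "u \<in> f ` I"
    then obtain x where "x \<in> I" "u = f x" by blast
    then show "\<iota> c * u \<in> f ` I"
      using is_ideal_mult[OF I] f_hom(3,4) by (metis image_eqI)
  qed
qed

lemma ex_maximal_ideal_superset:
  fixes I :: "'a set"
  assumes I: "is_ideal I" "I \<noteq> UNIV"
  shows "\<exists>N. maximal_ideal N \<and> I \<subseteq> N"
proof -
  let ?proper = "\<lambda>N. is_ideal N \<and> N \<noteq> UNIV \<and> I \<subseteq> N"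
  obtain N where N: "?proper N" and greatest: "\<And>J. ?proper J \<Longrightarrow> dim J \<le> dim N"
    using ex_has_greatest_nat[of ?proper I dim "Suc dimension"] I dim_subset_UNIV
    by (metis le_imp_less_Suc order.refl)
  have "maximal_ideal N"
    unfolding maximal_ideal_def
  proof (intro conjI allI impI)
    fix J assume J: "is_ideal J \<and> N \<subseteq> J"
    show "J = N \<or> J = UNIV"
      using N J greatest[of J] ideal_eq_if_dim_le[of N J] by blast
  qed (use N in auto)
  with N show ?thesis by blast
qed

lemma PIdl_mult_eq:
  fixes g h :: 'a
  assumes no_zero_divisor: "\<forall>y\<in>PIdl g. h * y = 0 \<longrightarrow> y = 0"
  shows "PIdl (h * g) = PIdl g"
proof -
  have span_eq: "span (PIdl g) = PIdl g"
    using subspace_ideal[OF is_ideal_PIdl] by simp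
  have "inj_on (\<lambda>y. y * h) (span (PIdl g))"
    unfolding span_eq
  proof (rule inj_onI)
    fix y z assume y: "y \<in> PIdl g" and z: "z \<in> PIdl g" and eq: "y * h = z * h"
    have "y - z \<in> PIdl g" by (rule is_ideal_diff[OF is_ideal_PIdl y z])
    moreover have "h * (y - z) = 0" using eq by (simp add: algebra_simps)
    ultimately have "y - z = 0" using no_zero_divisor by blast
    then show "y = z" by simp
  qed
  then have "dim ((\<lambda>y. y * h) ` PIdl g) = dim (PIdl g)"
    by (rule pair.dim_image_eq[OF linear_mult])
  moreover have "(\<lambda>y. y * h) ` PIdl g = PIdl (h * g)"
    by (auto simp: image_def algebra_simps) (metis mult.assoc)+
  moreover have "PIdl (h * g) \<subseteq> PIdl g"
    by (rule PIdl_subset[OF is_ideal_PIdl mult_mem_PIdl[OF PIdl_self]])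
  ultimately show ?thesis
    using ideal_eq_if_dim_le[OF is_ideal_PIdl is_ideal_PIdl] by simp
qed

lemma pencil_member_mult_kernel_ne_0:
  assumes unit: "(a * p + b * q) * y = y" and ker: "(p + \<iota> d * q) * y = 0"
    and "y \<noteq> 0" and "c \<noteq> d"
  shows "(p + \<iota> c * q) * y \<noteq> 0"
proof
  have p_y: "p * y = - (\<iota> d * (q * y))"
    using ker by (simp add: algebra_simps add_eq_0_iff)
  have "y = (b - a * \<iota> d) * (q * y)"
    using unit p_y by (simp add: algebra_simps)
  then have q_y: "q * y \<noteq> 0" using \<open>y \<noteq> 0\<close> by auto
  assume "(p + \<iota> c * q) * y = 0"
  then have "\<iota> (c - d) * (q * y) = 0"
    using p_y by (simp add: algebra_simps)
  then have "\<iota> (inverse (c - d)) * \<iota> (c - d) * (q * y) = 0"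
    by (simp add: mult.assoc)
  with q_y \<iota>_inverse[of "c - d"] \<open>c \<noteq> d\<close> show False by simp
qed

lemma pencil_prod_mult_kernel_ne_0:
  assumes unit: "(a * p + b * q) * y = y" and ker: "(p + \<iota> d * q) * y = 0"
    and "y \<noteq> 0" and "finite C" and "d \<notin> C"
  shows "(\<Prod>c\<in>C. p + \<iota> c * q) * y \<noteq> 0"
  using \<open>finite C\<close> \<open>d \<notin> C\<close>
proof (induction C rule: finite_induct)
  case empty
  with \<open>y \<noteq> 0\<close> show ?case by simp
next
  case (insert c C)
  let ?z = "(\<Prod>c\<in>C. p + \<iota> c * q) * y"
  have "(a * p + b * q) * ?z = ?z"
    using unit by (simp add: mult.left_commute[of "a * p + b * q"])
  moreover have "(p + \<iota> d * q) * ?z = 0"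
    using ker by (simp add: mult.left_commute[of "p + \<iota> d * q"])
  ultimately have "(p + \<iota> c * q) * ?z \<noteq> 0"
    using pencil_member_mult_kernel_ne_0 insert by blast
  with insert show ?case by (simp add: mult.assoc)
qed

lemma card_le_dim_pencil_annihilator:
  fixes V :: "'a set"
  assumes V: "is_ideal V" and unit: "\<forall>y\<in>V. (a * p + b * q) * y = y"
    and ker: "\<forall>d. \<exists>y\<in>V. y \<noteq> 0 \<and> (p + \<iota> d * q) * y = 0"
    and "finite C"
  shows "card C \<le> dim {y \<in> V. (\<Prod>c\<in>C. p + \<iota> c * q) * y = 0}"
  using \<open>finite C\<close>
proof (induction C rule: finite_induct)
  case (insert d C)
  let ?ann = "\<lambda>C. {y \<in> V. (\<Prod>c\<in>C. p + \<iota> c * q) * y = 0}"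
  obtain y where y: "y \<in> V" "y \<noteq> 0" "(p + \<iota> d * q) * y = 0"
    using ker by blast
  have prod_insert: "(\<Prod>c\<in>insert d C. p + \<iota> c * q) = (p + \<iota> d * q) * (\<Prod>c\<in>C. p + \<iota> c * q)"
    using insert by simp
  have "(\<Prod>c\<in>insert d C. p + \<iota> c * q) * y = (\<Prod>c\<in>C. p + \<iota> c * q) * ((p + \<iota> d * q) * y)"
    unfolding prod_insert by (simp only: mult.commute[of "p + \<iota> d * q"] mult.assoc)
  with y have y_in: "y \<in> ?ann (insert d C)" by simp
  have "(\<Prod>c\<in>C. p + \<iota> c * q) * y \<noteq> 0"
    using unit y insert.hyps by (intro pencil_prod_mult_kernel_ne_0[of a p b q y d C]) auto
  then have y_notin: "y \<notin> ?ann C" by blast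
  have subset: "?ann C \<subseteq> ?ann (insert d C)"
  proof
    fix x assume "x \<in> ?ann C"
    then show "x \<in> ?ann (insert d C)"
      unfolding prod_insert by (simp add: mult.assoc)
  qed
  have span_ann: "span (?ann D) = ?ann D" for D
    by (rule span_eq_iff[THEN iffD2, OF subspace_ideal[OF is_ideal_annihilator_Int[OF V]]])
  have "span (?ann C) \<subset> span (?ann (insert d C))"
    unfolding span_ann using subset y_in y_notin by blast
  then have "dim (?ann C) < dim (?ann (insert d C))"
    by (rule dim_psubset)
  moreover have "card (insert d C) = Suc (card C)"
    using insert.hyps by simp
  ultimately show ?case
    using insert.IH by linarith
qed simp

lemma ex_pencil_member_injective_on:
  fixes V :: "'a set"
  assumes k_infinite: "infinite (UNIV :: 'k set)"
    and V: "is_ideal V" and unit: "\<forall>y\<in>V. (a * p + b * q) * y = y"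
  shows "\<exists>d. \<forall>y\<in>V. (p + \<iota> d * q) * y = 0 \<longrightarrow> y = 0"
proof (rule ccontr)
  assume "\<nexists>d. \<forall>y\<in>V. (p + \<iota> d * q) * y = 0 \<longrightarrow> y = 0"
  then have ker: "\<forall>d. \<exists>y\<in>V. y \<noteq> 0 \<and> (p + \<iota> d * q) * y = 0" by blast
  obtain C :: "'k set" where C: "finite C" "card C = Suc dimension"
    using infinite_arbitrarily_large[OF k_infinite] by blast
  have "Suc dimension \<le> dim {y \<in> V. (\<Prod>c\<in>C. p + \<iota> c * q) * y = 0}"
    using card_le_dim_pencil_annihilator[OF V unit ker C(1)] C(2) by simp
  moreover have "dim {y \<in> V. (\<Prod>c\<in>C. p + \<iota> c * q) * y = 0} \<le> dimension"
    by (rule dim_subset_UNIV)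
  ultimately show False by linarith
qed

lemma ex_pencil_generator_PIdl:
  assumes k_infinite: "infinite (UNIV :: 'k set)"
    and gen: "PIdl g = {\<beta> * v + \<gamma> * w | \<beta> \<gamma>. True}"
  shows "\<exists>c. PIdl (v + \<iota> c * w) = PIdl g"
proof -
  have "v \<in> PIdl g"
    unfolding gen by (rule CollectI, rule exI[of _ 1], rule exI[of _ 0]) simp
  then obtain p where p: "v = p * g" by blast
  have "w \<in> PIdl g"
    unfolding gen by (rule CollectI, rule exI[of _ 0], rule exI[of _ 1]) simp
  then obtain q where q: "w = q * g" by blast
  have "g \<in> {\<beta> * v + \<gamma> * w | \<beta> \<gamma>. True}"
    unfolding gen[symmetric] by (rule PIdl_self)
  then obtain a b where ab: "g = a * v + b * w" by blast
  have unit_g: "(a * p + b * q) * g = g"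
    using ab p q by (simp add: algebra_simps)
  have "\<forall>y\<in>PIdl g. (a * p + b * q) * y = y"
  proof
    fix y assume "y \<in> PIdl g"
    then obtain r where "y = r * g" by blast
    then show "(a * p + b * q) * y = y"
      using unit_g by (metis mult.left_commute)
  qed
  then obtain d where "\<forall>y\<in>PIdl g. (p + \<iota> d * q) * y = 0 \<longrightarrow> y = 0"
    using ex_pencil_member_injective_on[OF k_infinite is_ideal_PIdl] by blast
  then have "PIdl ((p + \<iota> d * q) * g) = PIdl g"
    by (rule PIdl_mult_eq)
  moreover have "(p + \<iota> d * q) * g = v + \<iota> d * w"
    by (simp add: p q algebra_simps)
  ultimately show ?thesis by auto
qed

lemma subspace_subset_PIdl:
  assumes k_infinite: "infinite (UNIV :: 'k set)" and PIR: "principal_ideal_algebra \<iota>"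
    and N: "subspace (N :: 'a set)"
  shows "\<exists>x\<in>N. N \<subseteq> PIdl x"
proof -
  obtain x where x: "x \<in> N" and greatest: "\<And>y. y \<in> N \<Longrightarrow> dim (PIdl y) \<le> dim (PIdl x)"
    using ex_has_greatest_nat[of "\<lambda>y. y \<in> N" 0 "\<lambda>y. dim (PIdl y)" "Suc dimension"]
      subspace_0[OF N] dim_subset_UNIV by (metis le_imp_less_Suc)
  have "y \<in> PIdl x" if y: "y \<in> N" for y
  proof -
    let ?pair = "{\<beta> * x + \<gamma> * y | \<beta> \<gamma>. True}"
    obtain g where g: "PIdl g = ?pair"
      using PIR is_ideal_pair unfolding principal_ideal_algebra_def principal_ideal_def by metis
    then obtain c where c: "PIdl (x + \<iota> c * y) = PIdl g"
      using ex_pencil_generator_PIdl[OF k_infinite] by blast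
    have "x + \<iota> c * y \<in> N"
      using subspace_add[OF N x subspace_scale[OF N y]] by (simp add: alg_scale_def)
    then have dim_le: "dim (PIdl (x + \<iota> c * y)) \<le> dim (PIdl x)"
      by (rule greatest)
    have "x \<in> ?pair"
      by (rule CollectI, rule exI[of _ 1], rule exI[of _ 0]) simp
    then have "PIdl x \<subseteq> PIdl (x + \<iota> c * y)"
      unfolding c g[symmetric] by (rule PIdl_subset[OF is_ideal_PIdl])
    then have "PIdl x = PIdl (x + \<iota> c * y)"
      using ideal_eq_if_dim_le[OF is_ideal_PIdl is_ideal_PIdl _ dim_le] by blast
    moreover have "y \<in> ?pair"
      by (rule CollectI, rule exI[of _ 0], rule exI[of _ 1]) simp
    ultimately show "y \<in> PIdl x"
      unfolding c g by simp
  qed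
  with x show ?thesis by blast
qed

end

locale local_fd_algebra =
  fixes \<iota> :: "'k::field \<Rightarrow> 'a::comm_ring_1" and M :: "'a set"
  assumes local: "local_algebra \<iota> M"
begin

sublocale fd_algebra \<iota>
  using local by unfold_locales (simp add: local_algebra_def)

lemma maximal_M: "maximal_ideal M"
  and maximal_ideal_unique: "maximal_ideal N \<Longrightarrow> N = M"
  using local by (auto simp: local_algebra_def)

lemma is_ideal_M: "is_ideal M"
  using maximal_M by (simp add: maximal_ideal_def)

lemma one_notin_M: "1 \<notin> M"
  using maximal_M is_ideal_mult[of M 1] by (auto simp: maximal_ideal_def)

lemma unit_if_notin_M:
  assumes "u \<notin> M" shows "\<exists>v. v * u = 1"
proof (rule ccontr)
  assume not_unit: "\<nexists>v. v * u = 1"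
  have "1 \<notin> PIdl u"
  proof
    assume "1 \<in> PIdl u"
    then obtain v where "1 = v * u" by blast
    with not_unit show False by simp
  qed
  then obtain N where "maximal_ideal N" "PIdl u \<subseteq> N"
    using ex_maximal_ideal_superset[OF is_ideal_PIdl] by blast
  with assms PIdl_self maximal_ideal_unique show False by blast
qed

lemma nakayama_PIdl:
  assumes m: "m \<in> M" and b: "b \<in> PIdl (m * b)"
  shows "b = 0"
proof -
  obtain r where r: "b = r * (m * b)" using b by blast
  have "1 - r * m \<notin> M"
    using is_ideal_add[OF is_ideal_M _ is_ideal_mult[OF is_ideal_M m, of r]] one_notin_M by force
  then obtain v where v: "v * (1 - r * m) = 1"
    using unit_if_notin_M by blast
  have "(1 - r * m) * b = 0"
    using r by (simp add: algebra_simps)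
  then have "v * (1 - r * m) * b = 0" by (simp add: mult.assoc)
  with v show "b = 0" by simp
qed

lemma nilpotent_if_in_M:
  assumes "x \<in> M" shows "\<exists>n. x ^ n = 0"
proof -
  obtain j where least: "\<And>i. dim (PIdl (x ^ j)) \<le> dim (PIdl (x ^ i))"
    using ex_has_least_nat[of "\<lambda>_. True" 0 "\<lambda>i. dim (PIdl (x ^ i))"] by blast
  have "PIdl (x * x ^ j) \<subseteq> PIdl (x ^ j)"
    by (rule PIdl_subset[OF is_ideal_PIdl mult_mem_PIdl[OF PIdl_self]])
  then have "PIdl (x * x ^ j) = PIdl (x ^ j)"
    using ideal_eq_if_dim_le[OF is_ideal_PIdl is_ideal_PIdl] least[of "Suc j"] by simp
  then have "x ^ j = 0"
    using nakayama_PIdl[OF assms] PIdl_self by blast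
  then show ?thesis by blast
qed

lemma principal_ideal_algebra_if_M_principal:
  assumes M: "M = PIdl x"
  shows "principal_ideal_algebra \<iota>"
  unfolding principal_ideal_algebra_def
proof (intro conjI allI impI)
  show "fin_dim_algebra \<iota>" by (rule fin_dim)
  fix I :: "'a set" assume I: "is_ideal I"
  show "principal_ideal I"
  proof (cases "I = {0}")
    case True
    then have "I = PIdl 0" by simp
    then show ?thesis unfolding principal_ideal_def by blast
  next
    case False
    obtain n where "x ^ n = 0"
      using nilpotent_if_in_M M PIdl_self by blast
    then have "\<not> I \<subseteq> PIdl (x ^ n)"
      using False is_ideal_0[OF I] by auto
    moreover have "I \<subseteq> PIdl (x ^ 0)"
      by (metis (mono_tags) mem_Collect_eq mult_1_right power_0 subsetI)
    ultimately obtain j where j: "I \<subseteq> PIdl (x ^ j)" "\<not> I \<subseteq> PIdl (x ^ Suc j)"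
      using ex_least_nat_less[of "\<lambda>j. \<not> I \<subseteq> PIdl (x ^ j)" n] by (metis le_refl)
    then obtain y where y: "y \<in> I" "y \<notin> PIdl (x ^ Suc j)" by blast
    then obtain r where r: "y = r * x ^ j" using j by blast
    have "r \<notin> M"
    proof
      assume "r \<in> M"
      then obtain r' where "r = r' * x" using M by blast
      with r have "y = r' * x ^ Suc j" by (simp add: mult.assoc)
      with y(2) show False by blast
    qed
    then obtain v where "v * r = 1" using unit_if_notin_M by blast
    then have "x ^ j = v * y" using r by (simp add: mult.assoc[symmetric])
    then have "x ^ j \<in> I" using is_ideal_mult[OF I y(1)] by simp
    then have "I = PIdl (x ^ j)" using j(1) PIdl_subset[OF I] by blast
    then show ?thesis unfolding principal_ideal_def by blast
  qed
qed

lemma socle_meets_ideal: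
  assumes I: "is_ideal I" and nonzero: "I \<noteq> {0}"
  shows "\<exists>b\<in>I. b \<noteq> 0 \<and> b \<in> socle M"
proof -
  obtain a where "a \<in> I" "a \<noteq> 0" using nonzero is_ideal_0[OF I] by blast
  then obtain b where b: "b \<in> I" "b \<noteq> 0"
    and least: "\<And>b'. b' \<in> I \<Longrightarrow> b' \<noteq> 0 \<Longrightarrow> dim (PIdl b) \<le> dim (PIdl b')"
    using ex_has_least_nat[of "\<lambda>b. b \<in> I \<and> b \<noteq> 0" a "\<lambda>b. dim (PIdl b)"] by blast
  have "b * m = 0" if m: "m \<in> M" for m
  proof (rule ccontr)
    assume "b * m \<noteq> 0"
    then have "m * b \<noteq> 0" by (simp add: mult.commute)
    with is_ideal_mult[OF I b(1)] have "dim (PIdl b) \<le> dim (PIdl (m * b))"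
      by (rule least)
    moreover have "PIdl (m * b) \<subseteq> PIdl b"
      by (rule PIdl_subset[OF is_ideal_PIdl mult_mem_PIdl[OF PIdl_self]])
    ultimately have "PIdl (m * b) = PIdl b"
      using ideal_eq_if_dim_le[OF is_ideal_PIdl is_ideal_PIdl] by blast
    then have "b = 0"
      using nakayama_PIdl[OF m] PIdl_self by blast
    with b(2) show False ..
  qed
  with b show ?thesis unfolding socle_def by blast
qed

end

locale gorenstein_fd_algebra =
  fixes \<iota> :: "'k::field \<Rightarrow> 'a::comm_ring_1" and M :: "'a set"
  assumes gorenstein: "gorenstein \<iota> M"
begin

sublocale local_fd_algebra \<iota> M
  using gorenstein by unfold_locales (simp add: gorenstein_def)

lemma dim_socle: "dim (socle M) = 1"
  using gorenstein by (simp add: gorenstein_def)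

lemma obtain_socle_generator:
  obtains s where "s \<noteq> 0" "s \<in> socle M" "socle M = range (\<lambda>c. \<iota> c * s)"
proof -
  obtain B where B: "B \<subseteq> socle M" "independent B" "socle M \<subseteq> span B" "card B = dim (socle M)"
    by (rule basis_exists)
  then obtain s where s: "B = {s}"
    using dim_socle by (metis card_1_singletonE)
  have "span B = socle M"
    by (rule span_subspace[OF B(1,3) subspace_ideal[OF is_ideal_socle]])
  then have "socle M = range (\<lambda>c. \<iota> c * s)"
    using s by (simp add: span_singleton alg_scale_def)
  moreover have "s \<noteq> 0" "s \<in> socle M"
    using B(1,2) s by auto
  ultimately show thesis using that by blast
qed

lemma socle_subset_ideal:
  assumes I: "is_ideal I" and nonzero: "I \<noteq> {0}"
  shows "socle M \<subseteq> I"
proof -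
  obtain s where s: "socle M = range (\<lambda>c. \<iota> c * s)"
    using obtain_socle_generator by blast
  obtain b where b: "b \<in> I" "b \<noteq> 0" "b \<in> socle M"
    using socle_meets_ideal[OF I nonzero] by blast
  then obtain c where c: "b = \<iota> c * s" using s by blast
  with b(2) have "c \<noteq> 0" by auto
  then have "s = \<iota> (inverse c) * b"
    using c \<iota>_inverse by (simp add: mult.assoc[symmetric])
  then have "s \<in> I" using is_ideal_mult[OF I b(1)] by simp
  show ?thesis
  proof
    fix a assume "a \<in> socle M"
    then obtain d where "a = \<iota> d * s" using s by blast
    then show "a \<in> I" using is_ideal_mult[OF I \<open>s \<in> I\<close>] by simp
  qed
qed

lemma inj_if_socle_not_in_kernel:
  assumes g: "is_ring_hom g" and "a \<in> socle M" "g a \<noteq> 0"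
  shows "inj g"
proof -
  have "\<not> socle M \<subseteq> {x. g x = 0}"
    using assms(2,3) by blast
  then have "{x. g x = 0} = {0}"
    using socle_subset_ideal[OF is_ideal_kernel[OF g]] by blast
  then have "\<forall>x. g x = 0 \<longrightarrow> x = 0" by blast
  then show ?thesis using is_ring_hom_inj_iff[OF g] by blast
qed

lemma ex_residue_scalar: "\<exists>c. a - \<iota> c \<in> M"
proof -
  obtain s where s: "s \<noteq> 0" "s \<in> socle M" "socle M = range (\<lambda>c. \<iota> c * s)"
    by (rule obtain_socle_generator)
  have "a * s \<in> socle M"
    by (rule is_ideal_mult[OF is_ideal_socle s(2)])
  then obtain c where c: "a * s = \<iota> c * s" using s(3) by blast
  have "a - \<iota> c \<in> M"
  proof (rule ccontr)
    assume "a - \<iota> c \<notin> M"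
    then obtain v where v: "v * (a - \<iota> c) = 1" using unit_if_notin_M by blast
    have "(a - \<iota> c) * s = 0" using c by (simp add: algebra_simps)
    then have "v * (a - \<iota> c) * s = 0" by (simp add: mult.assoc)
    with v s(1) show False by simp
  qed
  then show ?thesis by blast
qed

lemma dimension_eq_Suc_dim_M: "dimension = Suc (dim M)"
proof -
  have span_M: "span M = M"
    using subspace_ideal[OF is_ideal_M] by simp
  have "span (insert 1 M) = UNIV"
  proof (intro set_eqI iffI)
    fix a :: 'a
    obtain c where "a - \<iota> c \<in> M" using ex_residue_scalar by blast
    then show "a \<in> span (insert 1 M)"
      unfolding span_breakdown_eq span_M alg_scale_def by auto
  qed simp
  then have "dimension = dim (insert 1 M)"
    by (metis dim_UNIV dim_span dimension_def)
  also have "\<dots> = Suc (dim M)"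
    using dim_insert[of 1 M] one_notin_M span_M by simp
  finally show ?thesis .
qed

lemma PIdl_eq_M_if_annihilator_in_socle:
  assumes x: "x \<in> M" and ann: "\<And>a. a * x = 0 \<Longrightarrow> a \<in> socle M"
  shows "PIdl x = M"
proof -
  have "{a. a * x = 0} \<subseteq> socle M" using ann by blast
  then have "dim {a. a * x = 0} \<le> dim (socle M)" by (rule dim_subset)
  moreover have "range (\<lambda>a. a * x) = PIdl x"
    unfolding image_def by simp
  ultimately have "dim M \<le> dim (PIdl x)"
    using pair.dim_kernel_add_dim_range[OF linear_mult, of x] dim_socle dimension_eq_Suc_dim_M
    by simp
  moreover have "PIdl x \<subseteq> M"
    by (rule PIdl_subset[OF is_ideal_M x])
  ultimately show ?thesis
    using ideal_eq_if_dim_le[OF is_ideal_PIdl is_ideal_M] by blast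
qed

lemma principal_ideal_algebra_if_embeds_in_PIR:
  fixes \<iota>B :: "'k \<Rightarrow> 'b::comm_ring_1" and f :: "'a \<Rightarrow> 'b"
  assumes k_infinite: "infinite (UNIV :: 'k set)" and PIR: "principal_ideal_algebra \<iota>B"
    and f: "alg_hom \<iota> \<iota>B f" and "inj f"
  shows "principal_ideal_algebra \<iota>"
proof -
  interpret B: fd_algebra \<iota>B
    using PIR by unfold_locales (simp add: principal_ideal_algebra_def)
  have f_mult: "f (a * b) = f a * f b" for a b
    using f by (simp add: alg_hom_def is_ring_hom_def)
  have f_0: "f 0 = 0"
    using f is_ring_hom_0 unfolding alg_hom_def by blast
  obtain x where x: "x \<in> M" and cover: "f ` M \<subseteq> PIdl (f x)"
    using B.subspace_subset_PIdl[OF k_infinite PIR B.subspace_image_ideal[OF f is_ideal_M]] by blast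
  have "a \<in> socle M" if ax: "a * x = 0" for a
    unfolding socle_def
  proof (intro CollectI ballI)
    fix m assume "m \<in> M"
    then obtain r where "f m = r * f x" using cover by blast
    then have "f (a * m) = r * f (a * x)" by (simp add: f_mult mult_ac)
    also have "\<dots> = f 0" using ax f_0 by simp
    finally show "a * m = 0" using \<open>inj f\<close> by (simp add: inj_eq)
  qed
  then have "M = PIdl x"
    using PIdl_eq_M_if_annihilator_in_socle[OF x] by simp
  then show ?thesis by (rule principal_ideal_algebra_if_M_principal)
qed

end

theorem theorem3p1:
  fixes \<iota>A :: "'k::field_char_0 \<Rightarrow> 'a::comm_ring_1"
    and \<iota>B :: "'k \<Rightarrow> 'b::comm_ring_1"
    and M :: "'a set"
    and f :: "'a \<Rightarrow> 'b"
  assumes "gorenstein \<iota>A M"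
    and "\<not> principal_ideal_algebra \<iota>A"
    and "principal_ideal_algebra \<iota>B"
    and "alg_hom \<iota>A \<iota>B f"
  shows "(\<forall>a\<in>socle M. f a = 0) \<and> \<not> inj f"
proof -
  interpret A: gorenstein_fd_algebra \<iota>A M
    by unfold_locales (rule assms(1))
  have f: "is_ring_hom f"
    using assms(4) by (simp add: alg_hom_def)
  have socle_to_0: "\<forall>a\<in>socle M. f a = 0"
  proof (rule ccontr)
    assume "\<not> (\<forall>a\<in>socle M. f a = 0)"
    then have "inj f"
      using A.inj_if_socle_not_in_kernel[OF f] by blast
    then have "principal_ideal_algebra \<iota>A"
      by (rule A.principal_ideal_algebra_if_embeds_in_PIR[OF infinite_UNIV_char_0 assms(3,4)])
    with assms(2) show False ..
  qed
  moreover obtain s where "s \<noteq> 0" "s \<in> socle M"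
    using A.obtain_socle_generator by blast
  ultimately have "f s = f 0 \<and> s \<noteq> 0"
    using is_ring_hom_0[OF f] by simp
  then have "\<not> inj f" by (auto simp: inj_eq)
  with socle_to_0 show ?thesis ..
qed

end
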